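(* Fix $R>0$, $\theta=2^{2R}-1$, and $a_2\in(0,1/(1+\theta))$ (with $a_1=1-a_2>a_2$). Let $P_{\mathrm{SC}}(\rho)$ be the SC outage probability defined below. Then $$-\lim_{\rho\to\infty}\frac{\log P_{\mathrm{SC}}(\rho)}{\log\rho}=\min\{m_{sd}N_d,\ m_{sr}N_r,\ m_{rd}N_d\}.$$
   Context: Let $N_r,N_d$ be positive integers, $m_{sr},m_{sd},m_{rd}$ positive integers, and $\Omega_{sr},\Omega_{sd},\Omega_{rd}>0$. Let $\{G_{sr,i}\}_{i=1}^{N_r}$, $\{G_{sd,j}\}_{j=1}^{N_d}$, $\{G_{rd,k}\}_{k=1}^{N_d}$ be mutually independent random variables, where each $G_{sr,i}$ has the Gamma density $\frac{(m_{sr}/\Omega_{sr})^{m_{sr}}x^{m_{sr}-1}}{\Gamma(m_{sr})}e^{-m_{sr}x/\Omega_{sr}}$, $x>0$, and analogously $G_{sd,j}$ with $(m_{sd},\Omega_{sd})$ and $G_{rd,k}$ with $(m_{rd},\Omega_{rd})$. SC gains: $g_{sr}=\max_i G_{sr,i}$, $g_{sd}=\max_j G_{sd,j}$, $g_{rd}=\max_k G_{rd,k}$. For $\rho>0$ the outage probability is $P_{\mathrm{SC}}(\rho)=1-\Pr\big(\tfrac{a_1\rho g_{sd}}{a_2\rho g_{sd}+1}\ge\theta\big)\Pr\big(\tfrac{a_1\rho g_{sr}}{a_2\rho g_{sr}+1}\ge\theta,\ a_2\rho g_{sr}\ge\theta\big)\Pr(\rho g_{rd}\ge\theta)$. *)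

theory Defs
  imports "HOL-Probability.Probability"
begin

text \<open>Gamma (Nakagami-m power) density with shape m and mean Omega.\<close>
definition gamma_pdf :: "nat \<Rightarrow> real \<Rightarrow> real \<Rightarrow> real" where
  "gamma_pdf m \<Omega> x = (if x > 0 then ((real m / \<Omega>) ^ m * x ^ (m - 1) / Gamma (real m))
                                       * exp (- real m * x / \<Omega>) else 0)"

definition sc_gain :: "(nat \<Rightarrow> 'a \<Rightarrow> real) \<Rightarrow> nat \<Rightarrow> 'a \<Rightarrow> real" where
  "sc_gain G N \<omega> = Max ((\<lambda>i. G i \<omega>) ` {1..N})"

definition P_SC :: "'a measure \<Rightarrow> (nat \<Rightarrow> 'a \<Rightarrow> real) \<Rightarrow> (nat \<Rightarrow> 'a \<Rightarrow> real) \<Rightarrow>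
    (nat \<Rightarrow> 'a \<Rightarrow> real) \<Rightarrow> nat \<Rightarrow> nat \<Rightarrow> real \<Rightarrow> real \<Rightarrow> real \<Rightarrow> real \<Rightarrow> real" where
  "P_SC M Gsr Gsd Grd Nr Nd a1 a2 \<theta> \<rho> =
     1 - measure M {\<omega> \<in> space M. a1 * \<rho> * sc_gain Gsd Nd \<omega> / (a2 * \<rho> * sc_gain Gsd Nd \<omega> + 1) \<ge> \<theta>}
       * measure M {\<omega> \<in> space M. a1 * \<rho> * sc_gain Gsr Nr \<omega> / (a2 * \<rho> * sc_gain Gsr Nr \<omega> + 1) \<ge> \<theta>
                                  \<and> a2 * \<rho> * sc_gain Gsr Nr \<omega> \<ge> \<theta>}
       * measure M {\<omega> \<in> space M. \<rho> * sc_gain Grd Nd \<omega> \<ge> \<theta>}"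

end

theory Submission
  imports Defs
begin

(* Each factor of P_SC is the probability that an SC gain reaches a threshold s / rho. A gain is the
   maximum of N independent Gamma variables of shape m, and a Gamma CDF behaves like y ^ m near 0, so
   Pr(gain < s / rho) is squeezed between two multiples of rho ^ (- m N). The outage probability
   1 - (1 - q1) (1 - q2) (1 - q3) lies between max q_i and q1 + q2 + q3, hence between two multiples
   of rho ^ (- d) for d the least exponent, and such two-sided bounds force - ln P / ln rho --> d. *)

definition has_decay_order :: "(real \<Rightarrow> real) \<Rightarrow> nat \<Rightarrow> bool" where
  "has_decay_order P d \<longleftrightarrow>
     (\<exists>L U. 0 < L \<and> (\<forall>\<^sub>F \<rho> in at_top. L / \<rho> ^ d \<le> P \<rho> \<and> P \<rho> \<le> U / \<rho> ^ d \<and> P \<rho> \<le> 1))"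

lemma tendsto_neg_ln_div_ln_if_has_decay_order:
  assumes "has_decay_order P d"
  shows "((\<lambda>\<rho>. - ln (P \<rho>) / ln \<rho>) \<longlongrightarrow> real d) at_top"
proof -
  obtain L U where "0 < L"
    and bounds: "\<forall>\<^sub>F \<rho> in at_top. L / \<rho> ^ d \<le> P \<rho> \<and> P \<rho> \<le> U / \<rho> ^ d \<and> P \<rho> \<le> 1"
    using assms unfolding has_decay_order_def by blast
  have sandwich: "\<forall>\<^sub>F \<rho> in at_top. real d - ln U / ln \<rho> \<le> - ln (P \<rho>) / ln \<rho>
                          \<and> - ln (P \<rho>) / ln \<rho> \<le> real d - ln L / ln \<rho>"
    using bounds eventually_gt_at_top[of 1]
  proof eventually_elim
    case (elim \<rho>)
    have "0 < L / \<rho> ^ d"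
      using elim \<open>0 < L\<close> by simp
    then have "0 < P \<rho>" "0 < U / \<rho> ^ d"
      using elim by linarith+
    then have "0 < U"
      using elim by (simp add: zero_less_divide_iff)
    then have "ln (L / \<rho> ^ d) \<le> ln (P \<rho>)" "ln (P \<rho>) \<le> ln (U / \<rho> ^ d)"
      using elim \<open>0 < L / \<rho> ^ d\<close> by simp_all
    then have "ln L - d * ln \<rho> \<le> ln (P \<rho>)" "ln (P \<rho>) \<le> ln U - d * ln \<rho>"
      using elim \<open>0 < L\<close> \<open>0 < U\<close> by (simp_all add: ln_div ln_realpow)
    then have "real d * ln \<rho> - ln U \<le> - ln (P \<rho>)" "- ln (P \<rho>) \<le> real d * ln \<rho> - ln L"
      by linarith+
    moreover have "0 < ln \<rho>"
      using elim by simp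
    ultimately have "(real d * ln \<rho> - ln U) / ln \<rho> \<le> - ln (P \<rho>) / ln \<rho>"
      "- ln (P \<rho>) / ln \<rho> \<le> (real d * ln \<rho> - ln L) / ln \<rho>"
      by (intro divide_right_mono; simp)+
    moreover have "real d - c / ln \<rho> = (real d * ln \<rho> - c) / ln \<rho>" for c
      using \<open>0 < ln \<rho>\<close> by (simp add: diff_divide_distrib)
    ultimately show ?case
      by (simp only:)
  qed
  have lim: "((\<lambda>\<rho>. real d - c / ln \<rho>) \<longlongrightarrow> real d) at_top" for c
    using tendsto_diff[OF tendsto_const tendsto_divide_0[OF tendsto_const
          filterlim_at_top_imp_at_infinity[OF ln_at_top]]] by simp
  have lower: "\<forall>\<^sub>F \<rho> in at_top. real d - ln U / ln \<rho> \<le> - ln (P \<rho>) / ln \<rho>"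
    and upper: "\<forall>\<^sub>F \<rho> in at_top. - ln (P \<rho>) / ln \<rho> \<le> real d - ln L / ln \<rho>"
    using sandwich by (simp_all only: eventually_conj_iff)
  show ?thesis
    by (rule tendsto_sandwich[OF lower upper lim lim])
qed

lemma has_decay_order_union:
  assumes "has_decay_order p d1" "has_decay_order q d2"
  shows "has_decay_order (\<lambda>\<rho>. 1 - (1 - p \<rho>) * (1 - q \<rho>)) (min d1 d2)"
proof -
  obtain L1 U1 where "0 < L1"
    and p: "\<forall>\<^sub>F \<rho> in at_top. L1 / \<rho> ^ d1 \<le> p \<rho> \<and> p \<rho> \<le> U1 / \<rho> ^ d1 \<and> p \<rho> \<le> 1"
    using assms(1) unfolding has_decay_order_def by blast
  obtain L2 U2 where "0 < L2"
    and q: "\<forall>\<^sub>F \<rho> in at_top. L2 / \<rho> ^ d2 \<le> q \<rho> \<and> q \<rho> \<le> U2 / \<rho> ^ d2 \<and> q \<rho> \<le> 1"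
    using assms(2) unfolding has_decay_order_def by blast
  define d where "d = min d1 d2"
  have weaken: "U / \<rho> ^ e \<le> U / \<rho> ^ d" if "d \<le> e" "1 \<le> \<rho>" "0 \<le> U" for U \<rho> :: real and e
    using that by (intro divide_left_mono power_increasing) auto
  have "\<forall>\<^sub>F \<rho> in at_top. min L1 L2 / \<rho> ^ d \<le> 1 - (1 - p \<rho>) * (1 - q \<rho>)
      \<and> 1 - (1 - p \<rho>) * (1 - q \<rho>) \<le> (U1 + U2) / \<rho> ^ d \<and> 1 - (1 - p \<rho>) * (1 - q \<rho>) \<le> 1"
    using p q eventually_ge_at_top[of 1]
  proof eventually_elim
    case (elim \<rho>)
    have pow: "0 < \<rho> ^ d1" "0 < \<rho> ^ d2"
      using elim by simp_all
    have "0 < L1 / \<rho> ^ d1" "0 < L2 / \<rho> ^ d2"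
      using pow \<open>0 < L1\<close> \<open>0 < L2\<close> by simp_all
    then have p: "0 \<le> p \<rho>" "p \<rho> \<le> 1" and q: "0 \<le> q \<rho>" "q \<rho> \<le> 1"
      and "0 \<le> U1 / \<rho> ^ d1" "0 \<le> U2 / \<rho> ^ d2"
      using elim by linarith+
    then have "0 \<le> U1" "0 \<le> U2"
      using pow by (simp_all add: zero_le_divide_iff)
    have "0 \<le> (1 - p \<rho>) * q \<rho>" "0 \<le> p \<rho> * (1 - q \<rho>)" "0 \<le> p \<rho> * q \<rho>"
      "0 \<le> (1 - p \<rho>) * (1 - q \<rho>)"
      using p q by simp_all
    then have r: "p \<rho> \<le> 1 - (1 - p \<rho>) * (1 - q \<rho>)" "q \<rho> \<le> 1 - (1 - p \<rho>) * (1 - q \<rho>)"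
      "1 - (1 - p \<rho>) * (1 - q \<rho>) \<le> p \<rho> + q \<rho>" "1 - (1 - p \<rho>) * (1 - q \<rho>) \<le> 1"
      by (simp_all add: algebra_simps)
    have "min L1 L2 / \<rho> ^ d \<le> 1 - (1 - p \<rho>) * (1 - q \<rho>)"
    proof (cases "d1 \<le> d2")
      case True
      have "min L1 L2 / \<rho> ^ d1 \<le> L1 / \<rho> ^ d1"
        using pow by (simp add: divide_right_mono)
      then show ?thesis
        using True elim r by (simp add: d_def)
    next
      case False
      have "min L1 L2 / \<rho> ^ d2 \<le> L2 / \<rho> ^ d2"
        using pow by (simp add: divide_right_mono)
      then show ?thesis
        using False elim r by (simp add: d_def)
    qed
    moreover have "U1 / \<rho> ^ d1 \<le> U1 / \<rho> ^ d" "U2 / \<rho> ^ d2 \<le> U2 / \<rho> ^ d"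
      using weaken elim \<open>0 \<le> U1\<close> \<open>0 \<le> U2\<close> by (simp_all add: d_def)
    then have "p \<rho> + q \<rho> \<le> (U1 + U2) / \<rho> ^ d"
      using elim by (simp add: add_divide_distrib)
    ultimately show ?case
      using r by (intro conjI; linarith)
  qed
  with \<open>0 < L1\<close> \<open>0 < L2\<close> show ?thesis
    unfolding has_decay_order_def d_def by (intro exI[of _ "min L1 L2"] exI[of _ "U1 + U2"]) simp
qed

definition cdf_order :: "'a measure \<Rightarrow> ('a \<Rightarrow> real) \<Rightarrow> nat \<Rightarrow> bool" where
  "cdf_order M X e \<longleftrightarrow> (\<exists>c C. 0 < c \<and> (\<forall>y. 0 < y \<longrightarrow> y \<le> 1 \<longrightarrow>
     c * y ^ e \<le> measure M {\<omega> \<in> space M. X \<omega> < y} \<and> measure M {\<omega> \<in> space M. X \<omega> < y} \<le> C * y ^ e))"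

lemma gamma_pdf_bounds:
  fixes m :: nat and \<Omega> x :: real
  assumes "0 < m" "0 < \<Omega>" "0 < x" "x \<le> 1"
  defines "K \<equiv> (real m / \<Omega>) ^ m / Gamma (real m)"
  shows "K * exp (- real m / \<Omega>) * x ^ (m - 1) \<le> gamma_pdf m \<Omega> x"
    and "gamma_pdf m \<Omega> x \<le> K * x ^ (m - 1)"
proof -
  have "0 \<le> K"
    using assms(1,2) by (simp add: K_def Gamma_real_pos)
  have pdf: "gamma_pdf m \<Omega> x = K * x ^ (m - 1) * exp (- real m * x / \<Omega>)"
    using assms(3) by (simp add: gamma_pdf_def K_def)
  have "0 \<le> K * x ^ (m - 1)"
    using \<open>0 \<le> K\<close> assms(3) by simp
  moreover have "exp (- real m / \<Omega>) \<le> exp (- real m * x / \<Omega>)" "exp (- real m * x / \<Omega>) \<le> 1"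
    using assms(2-4) by (simp_all add: divide_le_cancel mult_left_le)
  ultimately have "K * x ^ (m - 1) * exp (- real m / \<Omega>) \<le> gamma_pdf m \<Omega> x"
    "gamma_pdf m \<Omega> x \<le> K * x ^ (m - 1) * 1"
    unfolding pdf by (simp_all only: mult_left_mono)
  then show "K * exp (- real m / \<Omega>) * x ^ (m - 1) \<le> gamma_pdf m \<Omega> x"
    "gamma_pdf m \<Omega> x \<le> K * x ^ (m - 1)"
    by (simp_all add: ac_simps)
qed

lemma (in prob_space) cdf_order_if_density:
  fixes f :: "real \<Rightarrow> real"
  assumes X: "distributed M lborel X (\<lambda>x. ennreal (f x))" and "0 < m" "0 < a"
    and vanishes: "\<And>x. x \<le> 0 \<Longrightarrow> f x = 0"
    and bounds: "\<And>x. 0 < x \<Longrightarrow> x \<le> 1 \<Longrightarrow> a * x ^ (m - 1) \<le> f x \<and> f x \<le> A * x ^ (m - 1)"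
  shows "cdf_order M X m"
proof -
  have "0 \<le> A"
    using bounds[of 1] \<open>0 < a\<close> by simp
  have cdf: "ennreal (prob {\<omega> \<in> space M. X \<omega> < y}) = (\<integral>\<^sup>+x. ennreal (f x) * indicator {..<y} x \<partial>lborel)"
    for y
  proof -
    have "{\<omega> \<in> space M. X \<omega> < y} = X -` {..<y} \<inter> space M"
      by auto
    then show ?thesis
      using distributed_emeasure[OF X, of "{..<y}"] by (simp add: emeasure_eq_measure)
  qed
  have "a * (1 / 2) ^ m * y ^ m \<le> prob {\<omega> \<in> space M. X \<omega> < y}
      \<and> prob {\<omega> \<in> space M. X \<omega> < y} \<le> A * y ^ m" if "0 < y" "y \<le> 1" for y
  proof
    have "ennreal (a * (1 / 2) ^ m * y ^ m)
        = (\<integral>\<^sup>+x. ennreal (a * (y / 2) ^ (m - 1)) * indicator {y / 2<..<y} x \<partial>lborel)"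
    proof -
      have "a * (1 / 2) ^ m * y ^ m = a * (y / 2) ^ (m - 1) * (y - y / 2)"
        using \<open>0 < m\<close> by (cases m) (simp_all add: power_divide field_simps)
      then show ?thesis
        using that \<open>0 < a\<close> by (simp add: nn_integral_cmult_indicator ennreal_mult[symmetric])
    qed
    also have "\<dots> \<le> (\<integral>\<^sup>+x. ennreal (f x) * indicator {..<y} x \<partial>lborel)"
    proof (intro nn_integral_mono)
      fix x
      show "ennreal (a * (y / 2) ^ (m - 1)) * indicator {y / 2<..<y} x \<le> ennreal (f x) * indicator {..<y} x"
      proof (cases "y / 2 < x \<and> x < y")
        case True
        then have "a * (y / 2) ^ (m - 1) \<le> a * x ^ (m - 1)"
          using \<open>0 < a\<close> \<open>0 < y\<close> by (simp add: power_mono)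
        also have "\<dots> \<le> f x"
          using bounds[of x] True that by simp
        finally show ?thesis
          using True by (simp add: indicator_def ennreal_leI)
      qed (auto simp: indicator_def)
    qed
    finally show "a * (1 / 2) ^ m * y ^ m \<le> prob {\<omega> \<in> space M. X \<omega> < y}"
      by (simp flip: cdf)
    have "(\<integral>\<^sup>+x. ennreal (f x) * indicator {..<y} x \<partial>lborel)
        \<le> (\<integral>\<^sup>+x. ennreal (A * y ^ (m - 1)) * indicator {0<..<y} x \<partial>lborel)"
    proof (intro nn_integral_mono)
      fix x
      show "ennreal (f x) * indicator {..<y} x \<le> ennreal (A * y ^ (m - 1)) * indicator {0<..<y} x"
      proof (cases "0 < x \<and> x < y")
        case True
        have "f x \<le> A * x ^ (m - 1)"
          using bounds[of x] True that by simp
        also have "\<dots> \<le> A * y ^ (m - 1)"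
          using True \<open>0 \<le> A\<close> by (simp add: mult_left_mono power_mono)
        finally show ?thesis
          using True by (simp add: indicator_def ennreal_leI)
      qed (auto simp: indicator_def vanishes)
    qed
    also have "\<dots> = ennreal (A * y ^ m)"
    proof -
      have "A * y ^ (m - 1) * y = A * y ^ m"
        using \<open>0 < m\<close> by (cases m) simp_all
      then show ?thesis
        using that \<open>0 \<le> A\<close> by (simp add: nn_integral_cmult_indicator ennreal_mult'[symmetric])
    qed
    finally have "ennreal (prob {\<omega> \<in> space M. X \<omega> < y}) \<le> ennreal (A * y ^ m)"
      by (simp flip: cdf)
    then show "prob {\<omega> \<in> space M. X \<omega> < y} \<le> A * y ^ m"
      using \<open>0 \<le> A\<close> that by simp
  qed
  then show ?thesis
    unfolding cdf_order_def using \<open>0 < a\<close> by (intro exI[of _ "a * (1 / 2) ^ m"] exI[of _ A]) auto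
qed

lemma (in prob_space) gamma_distributed_nonneg:
  assumes "distributed M lborel X (\<lambda>x. ennreal (gamma_pdf m \<Omega> x))"
  shows "AE \<omega> in M. 0 \<le> X \<omega>"
  by (subst distributed_AE2[OF assms]) (auto simp: gamma_pdf_def split: if_splits)

lemma (in prob_space) cdf_order_gamma:
  assumes "distributed M lborel X (\<lambda>x. ennreal (gamma_pdf m \<Omega> x))" "0 < m" "0 < \<Omega>"
  shows "cdf_order M X m"
proof (rule cdf_order_if_density[OF assms(1,2)])
  define K where "K = (real m / \<Omega>) ^ m / Gamma (real m)"
  show "0 < K * exp (- real m / \<Omega>)"
    using assms(2,3) by (simp add: K_def Gamma_real_pos)
  show "K * exp (- real m / \<Omega>) * x ^ (m - 1) \<le> gamma_pdf m \<Omega> x \<and> gamma_pdf m \<Omega> x \<le> K * x ^ (m - 1)"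
    if "0 < x" "x \<le> 1" for x
    using gamma_pdf_bounds[OF assms(2,3) that] by (simp add: K_def)
qed (simp add: gamma_pdf_def)

lemma (in prob_space) prob_all_less_indep:
  fixes X :: "'i \<Rightarrow> 'a \<Rightarrow> real"
  assumes "indep_vars (\<lambda>_. borel) X I" "finite J" "J \<noteq> {}" "J \<subseteq> I"
  shows "prob {\<omega> \<in> space M. \<forall>j\<in>J. X j \<omega> < y} = (\<Prod>j\<in>J. prob {\<omega> \<in> space M. X j \<omega> < y})"
proof -
  have "indep_sets (\<lambda>i. {X i -` A \<inter> space M | A. A \<in> sets borel}) I"
    using assms(1) unfolding indep_vars_def2 by auto
  then have "prob (\<Inter>j\<in>J. X j -` {..<y} \<inter> space M) = (\<Prod>j\<in>J. prob (X j -` {..<y} \<inter> space M))"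
    by (rule indep_setsD[OF _ assms(4,3,2)]) (auto intro!: exI[of _ "{..<y}"] borel_open)
  moreover have "(\<Inter>j\<in>J. X j -` {..<y} \<inter> space M) = {\<omega> \<in> space M. \<forall>j\<in>J. X j \<omega> < y}"
    using assms(3) by auto
  ultimately show ?thesis
    by (simp add: vimage_def Int_def conj_commute)
qed

lemma (in prob_space) cdf_order_Max_indep:
  fixes X :: "'i \<Rightarrow> 'a \<Rightarrow> real"
  assumes "indep_vars (\<lambda>_. borel) X I" "finite J" "J \<noteq> {}" "J \<subseteq> I"
    and "\<And>j. j \<in> J \<Longrightarrow> cdf_order M (X j) e"
  shows "cdf_order M (\<lambda>\<omega>. Max ((\<lambda>j. X j \<omega>) ` J)) (e * card J)"
proof -
  define F where "F j y = prob {\<omega> \<in> space M. X j \<omega> < y}" for j y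
  have "\<forall>j\<in>J. \<exists>c C. 0 < c \<and> (\<forall>y. 0 < y \<longrightarrow> y \<le> 1 \<longrightarrow> c * y ^ e \<le> F j y \<and> F j y \<le> C * y ^ e)"
    using assms(5) unfolding cdf_order_def F_def by blast
  then obtain c C where bounds: "\<And>j. j \<in> J \<Longrightarrow> 0 < c j \<and>
      (\<forall>y. 0 < y \<longrightarrow> y \<le> 1 \<longrightarrow> c j * y ^ e \<le> F j y \<and> F j y \<le> C j * y ^ e)"
    by (metis bchoice)
  have cdf_Max: "prob {\<omega> \<in> space M. Max ((\<lambda>j. X j \<omega>) ` J) < y} = (\<Prod>j\<in>J. F j y)" for y
    using prob_all_less_indep[OF assms(1-4)] assms(2,3) by (simp add: F_def)
  have power: "(\<Prod>j\<in>J. a j * y ^ e) = prod a J * y ^ (e * card J)" for a and y :: real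
    by (simp add: prod.distrib power_mult)
  show ?thesis
    unfolding cdf_order_def cdf_Max
  proof (intro exI conjI allI impI)
    show "0 < prod c J"
      using bounds by (simp add: prod_pos)
    fix y :: real
    assume "0 < y" "y \<le> 1"
    then have nonneg: "0 \<le> c j * y ^ e" and lower: "c j * y ^ e \<le> F j y"
      and upper: "F j y \<le> C j * y ^ e" if "j \<in> J" for j
      using bounds[OF that] by (simp_all add: less_imp_le)
    have F_nonneg: "0 \<le> F j y" for j
      by (simp add: F_def)
    show "prod c J * y ^ (e * card J) \<le> (\<Prod>j\<in>J. F j y)"
      unfolding power[symmetric] by (rule prod_mono) (simp add: nonneg lower)
    show "(\<Prod>j\<in>J. F j y) \<le> prod C J * y ^ (e * card J)"
      unfolding power[symmetric] by (rule prod_mono) (simp add: upper F_nonneg)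
  qed
qed

lemma (in prob_space) sc_gain_of_indep_gamma:
  assumes indep: "indep_vars (\<lambda>_. borel) X I" and "{c} \<times> {1..N} \<subseteq> I" "\<And>k. X (c, k) = G k"
    and "0 < N" "0 < m" "0 < \<Omega>"
    and G: "\<And>k. k \<in> {1..N} \<Longrightarrow> distributed M lborel (G k) (\<lambda>x. ennreal (gamma_pdf m \<Omega> x))"
  shows "sc_gain G N \<in> borel_measurable M"
    and "AE \<omega> in M. 0 \<le> sc_gain G N \<omega>"
    and "cdf_order M (sc_gain G N) (m * N)"
proof -
  have [measurable]: "G k \<in> borel_measurable M" if "k \<in> {1..N}" for k
    using distributed_measurable[OF G[OF that]] by simp
  then show "sc_gain G N \<in> borel_measurable M"
    unfolding sc_gain_def[abs_def] by (intro borel_measurable_Max) auto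
  have "1 \<in> {1..N}"
    using \<open>0 < N\<close> by simp
  have G1_le: "G 1 \<omega> \<le> sc_gain G N \<omega>" for \<omega>
    unfolding sc_gain_def using \<open>1 \<in> {1..N}\<close> by (intro Max_ge) auto
  show "AE \<omega> in M. 0 \<le> sc_gain G N \<omega>"
    using gamma_distributed_nonneg[OF G[OF \<open>1 \<in> {1..N}\<close>]]
    by eventually_elim (rule order_trans[OF _ G1_le])
  have "{c} \<times> {1..N} = Pair c ` {1..N}"
    by auto
  then have "sc_gain G N = (\<lambda>\<omega>. Max ((\<lambda>j. X j \<omega>) ` ({c} \<times> {1..N})))"
    by (simp add: sc_gain_def fun_eq_iff image_image assms(3))
  moreover have "cdf_order M (\<lambda>\<omega>. Max ((\<lambda>j. X j \<omega>) ` ({c} \<times> {1..N}))) (m * card ({c} \<times> {1..N}))"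
    using assms(2,4-6) G by (intro cdf_order_Max_indep[OF indep] cdf_order_gamma) (auto simp: assms(3))
  ultimately show "cdf_order M (sc_gain G N) (m * N)"
    by (simp add: card_cartesian_product)
qed

lemma (in prob_space) has_decay_order_threshold_event:
  assumes X[measurable]: "X \<in> borel_measurable M"
    and "AE \<omega> in M. 0 \<le> X \<omega>" "cdf_order M X e" "0 < s"
    and sets: "\<And>\<rho>. {\<omega> \<in> space M. \<Phi> \<rho> (X \<omega>)} \<in> sets M"
    and threshold: "\<And>\<rho> x. 0 < \<rho> \<Longrightarrow> 0 \<le> x \<Longrightarrow> \<Phi> \<rho> x \<longleftrightarrow> s / \<rho> \<le> x"
  shows "has_decay_order (\<lambda>\<rho>. 1 - prob {\<omega> \<in> space M. \<Phi> \<rho> (X \<omega>)}) e"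
proof -
  obtain c C where "0 < c" and cdf: "\<And>y. 0 < y \<Longrightarrow> y \<le> 1 \<Longrightarrow>
      c * y ^ e \<le> prob {\<omega> \<in> space M. X \<omega> < y} \<and> prob {\<omega> \<in> space M. X \<omega> < y} \<le> C * y ^ e"
    using assms(3) unfolding cdf_order_def by blast
  have "\<forall>\<^sub>F \<rho> in at_top. c * s ^ e / \<rho> ^ e \<le> 1 - prob {\<omega> \<in> space M. \<Phi> \<rho> (X \<omega>)}
      \<and> 1 - prob {\<omega> \<in> space M. \<Phi> \<rho> (X \<omega>)} \<le> C * s ^ e / \<rho> ^ e
      \<and> 1 - prob {\<omega> \<in> space M. \<Phi> \<rho> (X \<omega>)} \<le> 1"
    using eventually_ge_at_top[of s]
  proof eventually_elim
    case (elim \<rho>)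
    then have "0 < \<rho>"
      using \<open>0 < s\<close> by linarith
    have "prob {\<omega> \<in> space M. \<Phi> \<rho> (X \<omega>)} = prob {\<omega> \<in> space M. s / \<rho> \<le> X \<omega>}"
      by (rule measure_eq_AE[OF AE_mp[OF assms(2)] sets]) (auto simp: threshold[OF \<open>0 < \<rho>\<close>])
    also have "\<dots> = 1 - prob {\<omega> \<in> space M. X \<omega> < s / \<rho>}"
    proof -
      have "{\<omega> \<in> space M. X \<omega> < s / \<rho>} = space M - {\<omega> \<in> space M. s / \<rho> \<le> X \<omega>}"
        by auto
      then show ?thesis
        by (simp add: prob_compl)
    qed
    finally have "1 - prob {\<omega> \<in> space M. \<Phi> \<rho> (X \<omega>)} = prob {\<omega> \<in> space M. X \<omega> < s / \<rho>}"
      by simp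
    moreover have "0 < s / \<rho>" "s / \<rho> \<le> 1"
      using \<open>0 < s\<close> elim by simp_all
    ultimately show ?case
      using cdf[of "s / \<rho>"] by (simp add: power_divide)
  qed
  then show ?thesis
    unfolding has_decay_order_def using \<open>0 < c\<close> \<open>0 < s\<close> by (intro exI[of _ "c * s ^ e"] exI) simp
qed

lemma threshold_le_sinr_iff:
  fixes a1 a2 \<theta> \<rho> x :: real
  assumes "0 < a1 - \<theta> * a2" "0 \<le> a2" "0 < \<rho>" "0 \<le> x"
  shows "\<theta> \<le> a1 * \<rho> * x / (a2 * \<rho> * x + 1) \<longleftrightarrow> \<theta> / (a1 - \<theta> * a2) / \<rho> \<le> x"
proof -
  have "0 < a2 * \<rho> * x + 1"
    using assms(2-4) by (simp add: add_nonneg_pos)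
  then have "\<theta> \<le> a1 * \<rho> * x / (a2 * \<rho> * x + 1) \<longleftrightarrow> \<theta> * (a2 * \<rho> * x + 1) \<le> a1 * \<rho> * x"
    by (simp add: pos_le_divide_eq)
  also have "\<dots> \<longleftrightarrow> \<theta> \<le> (a1 - \<theta> * a2) * \<rho> * x"
    by (simp add: algebra_simps)
  also have "\<dots> \<longleftrightarrow> \<theta> / (a1 - \<theta> * a2) / \<rho> \<le> x"
    using assms(1,3) by (simp add: divide_divide_eq_left pos_divide_le_eq ac_simps)
  finally show ?thesis .
qed

lemma threshold_le_sinr_and_snr_iff:
  fixes a1 a2 \<theta> \<rho> x :: real
  assumes "0 < a1 - \<theta> * a2" "0 < a2" "0 < \<rho>" "0 \<le> x"
  shows "\<theta> \<le> a1 * \<rho> * x / (a2 * \<rho> * x + 1) \<and> \<theta> \<le> a2 * \<rho> * x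
    \<longleftrightarrow> max (\<theta> / (a1 - \<theta> * a2)) (\<theta> / a2) / \<rho> \<le> x"
proof -
  have "\<theta> \<le> a2 * \<rho> * x \<longleftrightarrow> \<theta> / a2 / \<rho> \<le> x"
    using assms(2,3) by (simp add: divide_divide_eq_left pos_divide_le_eq ac_simps)
  then show ?thesis
    using threshold_le_sinr_iff[OF assms(1) less_imp_le[OF assms(2)] assms(3,4)] assms(3)
    by (simp add: max_divide_distrib_right)
qed

theorem mainTheorem10:
  fixes M :: "'a measure"
    and Gsr Gsd Grd :: "nat \<Rightarrow> 'a \<Rightarrow> real"
    and Nr Nd msr msd mrd :: nat
    and \<Omega>sr \<Omega>sd \<Omega>rd R \<theta> a1 a2 :: real
  assumes "prob_space M"
    and "Nr > 0" "Nd > 0" "msr > 0" "msd > 0" "mrd > 0"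
    and "\<Omega>sr > 0" "\<Omega>sd > 0" "\<Omega>rd > 0"
    and indep: "prob_space.indep_vars M (\<lambda>_. borel)
        (\<lambda>(c::nat, k). if c = 0 then Gsr k else if c = 1 then Gsd k else Grd k)
        (({0} \<times> {1..Nr}) \<union> ({1} \<times> {1..Nd}) \<union> ({2} \<times> {1..Nd}))"
    and "\<And>i. i \<in> {1..Nr} \<Longrightarrow> distributed M lborel (Gsr i) (\<lambda>x. ennreal (gamma_pdf msr \<Omega>sr x))"
    and "\<And>j. j \<in> {1..Nd} \<Longrightarrow> distributed M lborel (Gsd j) (\<lambda>x. ennreal (gamma_pdf msd \<Omega>sd x))"
    and "\<And>k. k \<in> {1..Nd} \<Longrightarrow> distributed M lborel (Grd k) (\<lambda>x. ennreal (gamma_pdf mrd \<Omega>rd x))"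
    and "R > 0"
    and "\<theta> = 2 powr (2 * R) - 1"
    and "0 < a2" "a2 < 1 / (1 + \<theta>)"
    and "a1 = 1 - a2"
  shows "((\<lambda>\<rho>. - ln (P_SC M Gsr Gsd Grd Nr Nd a1 a2 \<theta> \<rho>) / ln \<rho>)
           \<longlongrightarrow> real (min (msd * Nd) (min (msr * Nr) (mrd * Nd)))) at_top"
proof -
  interpret prob_space M by fact
  have "0 < \<theta>"
    using \<open>R > 0\<close> \<open>\<theta> = 2 powr (2 * R) - 1\<close> by simp
  have "a2 * (1 + \<theta>) < 1"
    using \<open>a2 < 1 / (1 + \<theta>)\<close> \<open>0 < \<theta>\<close> by (simp add: less_divide_eq)
  then have "0 < a1 - \<theta> * a2"
    using \<open>a1 = 1 - a2\<close> by (simp add: algebra_simps)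
  have sd: "sc_gain Gsd Nd \<in> borel_measurable M" "AE \<omega> in M. 0 \<le> sc_gain Gsd Nd \<omega>"
    "cdf_order M (sc_gain Gsd Nd) (msd * Nd)"
    by (rule sc_gain_of_indep_gamma[OF indep, where c=1]; use assms in force)+
  have sr: "sc_gain Gsr Nr \<in> borel_measurable M" "AE \<omega> in M. 0 \<le> sc_gain Gsr Nr \<omega>"
    "cdf_order M (sc_gain Gsr Nr) (msr * Nr)"
    by (rule sc_gain_of_indep_gamma[OF indep, where c=0]; use assms in force)+
  have rd: "sc_gain Grd Nd \<in> borel_measurable M" "AE \<omega> in M. 0 \<le> sc_gain Grd Nd \<omega>"
    "cdf_order M (sc_gain Grd Nd) (mrd * Nd)"
    by (rule sc_gain_of_indep_gamma[OF indep, where c=2]; use assms in force)+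
  note [measurable] = sd(1) sr(1) rd(1)
  have direct: "has_decay_order (\<lambda>\<rho>. 1 - prob {\<omega> \<in> space M.
      a1 * \<rho> * sc_gain Gsd Nd \<omega> / (a2 * \<rho> * sc_gain Gsd Nd \<omega> + 1) \<ge> \<theta>}) (msd * Nd)"
    by (rule has_decay_order_threshold_event[OF sd, where s = "\<theta> / (a1 - \<theta> * a2)"])
      (use \<open>0 < \<theta>\<close> \<open>0 < a1 - \<theta> * a2\<close> \<open>0 < a2\<close> in \<open>simp_all add: threshold_le_sinr_iff\<close>)
  have first_hop: "has_decay_order (\<lambda>\<rho>. 1 - prob {\<omega> \<in> space M.
      a1 * \<rho> * sc_gain Gsr Nr \<omega> / (a2 * \<rho> * sc_gain Gsr Nr \<omega> + 1) \<ge> \<theta>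
      \<and> a2 * \<rho> * sc_gain Gsr Nr \<omega> \<ge> \<theta>}) (msr * Nr)"
    by (rule has_decay_order_threshold_event[OF sr, where s = "max (\<theta> / (a1 - \<theta> * a2)) (\<theta> / a2)"])
      (use \<open>0 < \<theta>\<close> \<open>0 < a1 - \<theta> * a2\<close> \<open>0 < a2\<close>
        in \<open>simp_all add: threshold_le_sinr_and_snr_iff less_max_iff_disj\<close>)
  have second_hop: "has_decay_order (\<lambda>\<rho>. 1 - prob {\<omega> \<in> space M. \<rho> * sc_gain Grd Nd \<omega> \<ge> \<theta>}) (mrd * Nd)"
    by (rule has_decay_order_threshold_event[OF rd, where s = \<theta>])
      (use \<open>0 < \<theta>\<close> in \<open>simp_all add: pos_divide_le_eq ac_simps\<close>)
  have "has_decay_order (P_SC M Gsr Gsd Grd Nr Nd a1 a2 \<theta>)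
      (min (msd * Nd) (min (msr * Nr) (mrd * Nd)))"
    using has_decay_order_union[OF direct has_decay_order_union[OF first_hop second_hop]]
    unfolding P_SC_def[abs_def] by (simp add: mult.assoc)
  then show ?thesis
    by (rule tendsto_neg_ln_div_ln_if_has_decay_order)
qed

end
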